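(* Let $k\ge1$ be an odd integer and let $a$ be a positive integer. Then $$\binom{2ka-1}{2k-1}\equiv(-1)^{a+1}\binom{ka-1}{k-1}\pmod 4.$$ *)

theory Defs
  imports "HOL-Number_Theory.Number_Theory"
begin

end

theory Submission
  imports Defs
begin

text \<open>Write \<open>(2n-1 choose 2k-1) (2k-1)!\<close> as the falling factorial \<open>(2n-1)(2n-2)\<cdots>(2n-2k+1)\<close>
  and split both it and \<open>(2k-1)!\<close> into odd and even factors. The even factors are
  \<open>2^(k-1)\<close> times \<open>(n-1)\<cdots>(n-k+1)\<close> and \<open>(k-1)!\<close> respectively, so
  \<open>(2n-1 choose 2k-1) \<Prod>i<k. (2i+1) = (n-1 choose k-1) \<Prod>i<k. (2n-2i-1)\<close>.
  Modulo 4 each factor \<open>2n-2i-1\<close> is \<open>(-1)^(n+1) (2i+1)\<close>; for odd \<open>k\<close> the signs multiply to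
  \<open>(-1)^(n+1)\<close>, and the odd product \<open>\<Prod>i<k. (2i+1)\<close> cancels modulo 4. Finally \<open>n = ka\<close> has
  the parity of \<open>a\<close>.\<close>

lemma prod_lessThan_Suc_double_split:
  fixes f :: "nat \<Rightarrow> 'a::comm_monoid_mult"
  shows "(\<Prod>i<Suc (2*m). f i) = (\<Prod>i<Suc m. f (2*i)) * (\<Prod>i<m. f (2*i+1))"
  by (induction m) (simp_all add: ac_simps)

lemma fact_mult_binomial_eq_prod:
  fixes n k :: nat
  assumes "k \<le> n"
  shows "fact k * (n choose k) = (\<Prod>i<k. n - i)"
proof -
  have "(of_nat (fact k * (n choose k)) :: real) = of_nat (\<Prod>i<k. n - i)"
    using assms by (simp add: binomial_gbinomial gbinomial_mult_fact of_nat_diff atLeast0LessThan)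
  then show ?thesis by (rule of_nat_eq_iff[THEN iffD1])
qed

lemma fact_Suc_double:
  "fact (Suc (2*m)) = (\<Prod>i<Suc m. 2*i+1) * 2^m * (fact m :: nat)"
proof -
  have "fact (Suc (2*m)) = (\<Prod>i<Suc (2*m). Suc i)"
    by (simp add: fact_prod_Suc atLeast0LessThan)
  also have "\<dots> = (\<Prod>i<Suc m. 2*i+1) * (\<Prod>i<m. 2 * Suc i)"
    unfolding prod_lessThan_Suc_double_split by simp
  also have "(\<Prod>i<m. 2 * Suc i) = 2^m * (fact m :: nat)"
    unfolding prod.distrib by (simp add: fact_prod_Suc atLeast0LessThan)
  finally show ?thesis by (simp add: ac_simps)
qed

lemma binomial_double_mult_odd_prod:
  fixes n m :: nat
  assumes "m < n"
  shows "((2*n - 1) choose (2*m + 1)) * (\<Prod>i<Suc m. 2*i+1)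
         = ((n - 1) choose m) * (\<Prod>i<Suc m. 2*n - 2*i - 1)"
proof -
  have "((2*n - 1) choose (2*m + 1)) * (\<Prod>i<Suc m. 2*i+1) * (2^m * fact m)
        = fact (Suc (2*m)) * ((2*n - 1) choose Suc (2*m))"
    unfolding fact_Suc_double by (simp only: Suc_eq_plus1 ac_simps)
  also have "\<dots> = (\<Prod>i<Suc (2*m). 2*n - 1 - i)"
    using assms by (intro fact_mult_binomial_eq_prod) simp
  also have "\<dots> = (\<Prod>i<Suc m. 2*n - 2*i - 1) * (\<Prod>i<m. 2 * (n - 1 - i))"
    unfolding prod_lessThan_Suc_double_split by (simp add: algebra_simps diff_mult_distrib2)
  also have "(\<Prod>i<m. 2 * (n - 1 - i)) = 2^m * (fact m * ((n - 1) choose m))"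
    using assms by (simp add: prod.distrib fact_mult_binomial_eq_prod)
  finally show ?thesis by (simp add: ac_simps)
qed

lemma odd_complement_cong_mod4:
  fixes n i :: nat
  assumes "i < n"
  shows "[int (2*n - 2*i - 1) = (-1) ^ (n + 1) * int (2*i + 1)] (mod 4)"
proof -
  have diff: "int (2*n - 2*i - 1) = 2 * int n - int (2*i + 1)"
    using assms by (simp add: of_nat_diff)
  obtain b where "n = 2*b \<or> n = 2*b + 1" by (metis evenE oddE)
  then have "2 * int n - int (2*i + 1) - (-1) ^ (n + 1) * int (2*i + 1)
             = 4 * (if even n then int b else int b - int i)"
    by auto
  then show ?thesis unfolding diff cong_iff_dvd_diff by (metis dvd_triv_left)
qed

lemma prod_odd_complements_cong_mod4:
  fixes n k :: nat
  assumes "k \<le> n"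
  shows "[int (\<Prod>i<k. 2*n - 2*i - 1) = (-1) ^ ((n + 1) * k) * int (\<Prod>i<k. 2*i + 1)] (mod 4)"
proof -
  have "[int (\<Prod>i<k. 2*n - 2*i - 1) = (\<Prod>i<k. (-1) ^ (n + 1) * int (2*i + 1))] (mod 4)"
    unfolding of_nat_prod using assms by (intro cong_prod odd_complement_cong_mod4) auto
  then show ?thesis by (simp only: prod.distrib prod_constant card_lessThan power_mult of_nat_prod)
qed

lemma binomial_double_odd_cong_mod4:
  fixes n k :: nat
  assumes "odd k" and "k \<le> n"
  shows "[int ((2*n - 1) choose (2*k - 1)) = (-1) ^ (n + 1) * int ((n - 1) choose (k - 1))] (mod 4)"
proof -
  obtain m where k: "k = Suc m" using assms(1) by (cases k) auto
  define D where "D = (\<Prod>i<k. 2*i + 1)"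
  define N where "N = (\<Prod>i<k. 2*n - 2*i - 1)"
  have "((2*n - 1) choose (2*k - 1)) * D = ((n - 1) choose (k - 1)) * N"
    using binomial_double_mult_odd_prod[of m n] assms(2) unfolding D_def N_def k by simp
  then have "int ((2*n - 1) choose (2*k - 1)) * int D = int ((n - 1) choose (k - 1)) * int N"
    by (metis of_nat_mult)
  moreover have "[int N = (-1) ^ (n + 1) * int D] (mod 4)"
  proof -
    have "(-1::int) ^ ((n + 1) * k) = (-1) ^ (n + 1)"
      using assms(1) by (simp add: minus_one_power_iff)
    then show ?thesis
      using prod_odd_complements_cong_mod4[OF assms(2)] unfolding D_def N_def by simp
  qed
  ultimately have scaled: "[int ((2*n - 1) choose (2*k - 1)) * int D
                    = (-1) ^ (n + 1) * int ((n - 1) choose (k - 1)) * int D] (mod 4)"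
    by (metis cong_scalar_left mult.assoc mult.left_commute)
  have "coprime (int D) (2^2)"
    unfolding D_def coprime_power_right_iff by (simp add: even_prod_iff)
  then have "coprime (int D) 4" by simp
  with scaled show ?thesis by (simp only: cong_mult_rcancel)
qed

theorem lemma3p2:
  fixes k a :: nat
  assumes "k \<ge> 1" and "odd k" and "a \<ge> 1"
  shows "[int ((2*k*a - 1) choose (2*k - 1)) = (-1) ^ (a + 1) * int ((k*a - 1) choose (k - 1))] (mod 4)"
proof -
  have "k \<le> k*a" using assms(3) by simp
  then have "[int ((2*(k*a) - 1) choose (2*k - 1)) = (-1) ^ (k*a + 1) * int ((k*a - 1) choose (k - 1))] (mod 4)"
    using assms(2) by (rule binomial_double_odd_cong_mod4[rotated])
  moreover have "(-1::int) ^ (k*a + 1) = (-1) ^ (a + 1)"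
    using assms(2) by (simp add: minus_one_power_iff)
  ultimately show ?thesis by (simp add: mult.assoc)
qed

end
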